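(* Let $\Gamma$ be a finite simplicial graph with no SIL, and let $v,x,y$ be distinct vertices with $v\le x$ and $v\le y$. Then $x$ and $y$ commute in $\mathbb{A}_\Gamma$ (i.e. are adjacent).
   Context: $\mathbb{A}_\Gamma$ is the right-angled Artin group on $\Gamma$. $\mathrm{lk}(u)$ = neighbours of $u$, $\mathrm{st}(u)=\mathrm{lk}(u)\cup\{u\}$; $u\le v$ iff $\mathrm{lk}(u)\subseteq\mathrm{st}(v)$. A SIL is a triple $(x,y\mid z)$ of pairwise non-adjacent vertices such that the component of $\Gamma\setminus(\mathrm{lk}(x)\cap\mathrm{lk}(y))$ containing $z$ contains neither $x$ nor $y$. *)

theory Defs
  imports Main
begin

definition finite_simple_graph :: "'a set \<Rightarrow> ('a \<Rightarrow> 'a \<Rightarrow> bool) \<Rightarrow> bool" where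
  "finite_simple_graph V E \<longleftrightarrow> finite V \<and>
     (\<forall>a b. E a b \<longrightarrow> a \<in> V \<and> b \<in> V) \<and>
     (\<forall>a b. E a b \<longrightarrow> E b a) \<and> (\<forall>a. \<not> E a a)"

definition lk :: "'a set \<Rightarrow> ('a \<Rightarrow> 'a \<Rightarrow> bool) \<Rightarrow> 'a \<Rightarrow> 'a set" where
  "lk V E u = {w \<in> V. E u w}"

definition st :: "'a set \<Rightarrow> ('a \<Rightarrow> 'a \<Rightarrow> bool) \<Rightarrow> 'a \<Rightarrow> 'a set" where
  "st V E u = lk V E u \<union> {u}"

definition dom_le :: "'a set \<Rightarrow> ('a \<Rightarrow> 'a \<Rightarrow> bool) \<Rightarrow> 'a \<Rightarrow> 'a \<Rightarrow> bool" where
  "dom_le V E u v \<longleftrightarrow> lk V E u \<subseteq> st V E v"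

definition component :: "'a set \<Rightarrow> ('a \<Rightarrow> 'a \<Rightarrow> bool) \<Rightarrow> 'a \<Rightarrow> 'a set" where
  "component S E z = {w. z \<in> S \<and> (\<lambda>a b. E a b \<and> a \<in> S \<and> b \<in> S)\<^sup>*\<^sup>* z w}"

definition is_SIL :: "'a set \<Rightarrow> ('a \<Rightarrow> 'a \<Rightarrow> bool) \<Rightarrow> 'a \<Rightarrow> 'a \<Rightarrow> 'a \<Rightarrow> bool" where
  "is_SIL V E x y z \<longleftrightarrow> x \<in> V \<and> y \<in> V \<and> z \<in> V \<and>
     x \<noteq> y \<and> x \<noteq> z \<and> y \<noteq> z \<and>
     \<not> E x y \<and> \<not> E x z \<and> \<not> E y z \<and>
     (let C = component (V - (lk V E x \<inter> lk V E y)) E z in x \<notin> C \<and> y \<notin> C)"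

definition no_SIL :: "'a set \<Rightarrow> ('a \<Rightarrow> 'a \<Rightarrow> bool) \<Rightarrow> bool" where
  "no_SIL V E \<longleftrightarrow> (\<forall>x y z. \<not> is_SIL V E x y z)"

end

theory Submission
  imports Defs
begin

text \<open>If \<open>x\<close> and \<open>y\<close> were not adjacent, then neither is adjacent to \<open>v\<close> (an edge \<open>v x\<close>
  would put \<open>x\<close> into \<open>st(y)\<close>), so \<open>lk(v) \<subseteq> lk(x) \<inter> lk(y)\<close>.  Removing \<open>lk(x) \<inter> lk(y)\<close>
  therefore isolates \<open>v\<close>, and \<open>(x, y | v)\<close> is a SIL.\<close>

lemma dom_le_adjacent:
  assumes "dom_le V E u w" and "E u a" and "a \<in> V" and "a \<noteq> w"
  shows "E w a"
proof -
  have "a \<in> lk V E u" using assms(2,3) by (simp add: lk_def)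
  with assms(1,4) show ?thesis by (auto simp: dom_le_def st_def lk_def)
qed

lemma component_singleton_if_link_removed:
  assumes "\<And>b. E v b \<Longrightarrow> b \<notin> S"
  shows "component S E v \<subseteq> {v}"
proof
  fix w assume "w \<in> component S E v"
  then have "(\<lambda>a b. E a b \<and> a \<in> S \<and> b \<in> S)\<^sup>*\<^sup>* v w"
    by (simp add: component_def)
  then have "w = v"
    by (induction rule: rtranclp_induct) (use assms in auto)
  then show "w \<in> {v}" by simp
qed

theorem lemma4p3:
  fixes V :: "'a set" and E :: "'a \<Rightarrow> 'a \<Rightarrow> bool" and v x y :: 'a
  assumes "finite_simple_graph V E"
    and "no_SIL V E"
    and "v \<in> V" and "x \<in> V" and "y \<in> V"
    and "v \<noteq> x" and "v \<noteq> y" and "x \<noteq> y"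
    and "dom_le V E v x" and "dom_le V E v y"
  shows "E x y"
proof (rule ccontr)
  assume nxy: "\<not> E x y"
  have sym: "\<And>a b. E a b \<Longrightarrow> E b a" and inV: "\<And>a b. E a b \<Longrightarrow> a \<in> V \<and> b \<in> V"
    using assms(1) by (auto simp: finite_simple_graph_def)
  have nvx: "\<not> E v x" and nvy: "\<not> E v y"
    using dom_le_adjacent[OF assms(10)] dom_le_adjacent[OF assms(9)] assms(4,5,8) nxy sym
    by blast+
  let ?L = "lk V E x \<inter> lk V E y"
  have "E v b \<Longrightarrow> b \<in> ?L" for b
    using dom_le_adjacent[OF assms(9)] dom_le_adjacent[OF assms(10)] inV[of v b] nvx nvy
    by (auto simp: lk_def)
  then have "component (V - ?L) E v \<subseteq> {v}"
    by (intro component_singleton_if_link_removed) blast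
  with assms(3-8) nxy nvx nvy sym have "is_SIL V E x y v"
    by (auto simp: is_SIL_def Let_def)
  with assms(2) show False by (simp add: no_SIL_def)
qed

end
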